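(* Let $k$ be a positive integer, let $G$ be a connected graph of order at least $2$ with diameter $\mathrm{diam}(G)<k$, and let $H$ be a connected adjacency $k$-resolved graph of order $n_2$. Then $\mathrm{ldim}_f(G\boxtimes H)\leq n_2\cdot \mathrm{ldim}_f(G)$.
   Context: All graphs are finite, simple and connected; $d$ is the shortest-path distance. For an edge $uv$ of a graph $X$, $L_X(uv)=\{x\in V(X): d_X(u,x)\neq d_X(v,x)\}$. A function $f:V(X)\to[0,1]$ is a local resolving function of $X$ if $\sum_{x\in L_X(uv)}f(x)\geq 1$ for every edge $uv$; $\mathrm{ldim}_f(X)$ is the minimum of $\sum_{v}f(v)$ over all local resolving functions. For vertices $x,y$, the interval $I[x,y]$ is the set of vertices lying on some shortest $x$–$y$ path. A graph $H$ is adjacency $k$-resolved if for every two adjacent vertices $x,y$ there is $w\in V(H)$ such that ($d_H(y,w)\geq k$ and $x\in I[y,w]$) or ($d_H(x,w)\geq k$ and $y\in I[x,w]$). The strong product $G\boxtimes H$ has vertex set $V(G)\times V(H)$, and distinct $(u_1,v_1),(u_2,v_2)$ are adjacent iff ($u_1u_2\in E(G)$ or $u_1=u_2$) and ($v_1v_2\in E(H)$ or $v_1=v_2$). *)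

theory Defs
  imports Complex_Main
begin

definition graph :: "'a set \<Rightarrow> ('a \<Rightarrow> 'a \<Rightarrow> bool) \<Rightarrow> bool" where
  "graph V E \<longleftrightarrow> finite V \<and> V \<noteq> {} \<and>
     (\<forall>x y. E x y \<longrightarrow> x \<in> V \<and> y \<in> V) \<and>
     (\<forall>x. \<not> E x x) \<and> (\<forall>x y. E x y \<longrightarrow> E y x)"

definition walk :: "'a set \<Rightarrow> ('a \<Rightarrow> 'a \<Rightarrow> bool) \<Rightarrow> 'a list \<Rightarrow> bool" where
  "walk V E xs \<longleftrightarrow> xs \<noteq> [] \<and> set xs \<subseteq> V \<and> successively E xs"

definition walk_between :: "'a set \<Rightarrow> ('a \<Rightarrow> 'a \<Rightarrow> bool) \<Rightarrow> 'a \<Rightarrow> 'a \<Rightarrow> 'a list \<Rightarrow> bool" where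
  "walk_between V E x y xs \<longleftrightarrow> walk V E xs \<and> hd xs = x \<and> last xs = y"

definition connected_graph :: "'a set \<Rightarrow> ('a \<Rightarrow> 'a \<Rightarrow> bool) \<Rightarrow> bool" where
  "connected_graph V E \<longleftrightarrow> graph V E \<and>
     (\<forall>x\<in>V. \<forall>y\<in>V. \<exists>xs. walk_between V E x y xs)"

definition gdist :: "'a set \<Rightarrow> ('a \<Rightarrow> 'a \<Rightarrow> bool) \<Rightarrow> 'a \<Rightarrow> 'a \<Rightarrow> nat" where
  "gdist V E x y = (LEAST n. \<exists>xs. walk_between V E x y xs \<and> length xs = n + 1)"

definition diam :: "'a set \<Rightarrow> ('a \<Rightarrow> 'a \<Rightarrow> bool) \<Rightarrow> nat" where
  "diam V E = Max {gdist V E x y | x y. x \<in> V \<and> y \<in> V}"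

definition interval :: "'a set \<Rightarrow> ('a \<Rightarrow> 'a \<Rightarrow> bool) \<Rightarrow> 'a \<Rightarrow> 'a \<Rightarrow> 'a set" where
  "interval V E x y = {z. \<exists>xs. walk_between V E x y xs \<and>
       length xs = gdist V E x y + 1 \<and> z \<in> set xs}"

definition resolving_set_edge :: "'a set \<Rightarrow> ('a \<Rightarrow> 'a \<Rightarrow> bool) \<Rightarrow> 'a \<Rightarrow> 'a \<Rightarrow> 'a set" where
  "resolving_set_edge V E u v = {x\<in>V. gdist V E u x \<noteq> gdist V E v x}"

definition local_resolving_function ::
  "'a set \<Rightarrow> ('a \<Rightarrow> 'a \<Rightarrow> bool) \<Rightarrow> ('a \<Rightarrow> real) \<Rightarrow> bool" where
  "local_resolving_function V E f \<longleftrightarrow>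
     (\<forall>v\<in>V. 0 \<le> f v \<and> f v \<le> 1) \<and>
     (\<forall>u v. E u v \<longrightarrow> (\<Sum>x\<in>resolving_set_edge V E u v. f x) \<ge> 1)"

definition ldim_f :: "'a set \<Rightarrow> ('a \<Rightarrow> 'a \<Rightarrow> bool) \<Rightarrow> real" where
  "ldim_f V E = Inf {(\<Sum>v\<in>V. f v) | f. local_resolving_function V E f}"

definition adjacency_k_resolved :: "nat \<Rightarrow> 'a set \<Rightarrow> ('a \<Rightarrow> 'a \<Rightarrow> bool) \<Rightarrow> bool" where
  "adjacency_k_resolved k V E \<longleftrightarrow>
     (\<forall>x y. E x y \<longrightarrow> (\<exists>w\<in>V.
        (gdist V E y w \<ge> k \<and> x \<in> interval V E y w) \<or>
        (gdist V E x w \<ge> k \<and> y \<in> interval V E x w)))"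

definition strong_product_edges ::
  "'a set \<Rightarrow> 'b set \<Rightarrow> ('a \<Rightarrow> 'a \<Rightarrow> bool) \<Rightarrow> ('b \<Rightarrow> 'b \<Rightarrow> bool) \<Rightarrow> ('a \<times> 'b) \<Rightarrow> ('a \<times> 'b) \<Rightarrow> bool" where
  "strong_product_edges V1 V2 E1 E2 p q \<longleftrightarrow> p \<in> V1 \<times> V2 \<and> q \<in> V1 \<times> V2 \<and> p \<noteq> q \<and>
     (E1 (fst p) (fst q) \<or> fst p = fst q) \<and> (E2 (snd p) (snd q) \<or> snd p = snd q)"

end

theory Submission
  imports Defs
begin

text \<open>Distances in the strong product are maxima of the coordinate distances. Given a local
  resolving function f of G, the function (x, v) \<mapsto> f x resolves every edge of G \<boxtimes> H and has
  weight n2 times that of f. An edge inside a copy G \<times> {v} is resolved by the copy of the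
  resolving set of the corresponding edge of G. An edge whose H-coordinates v1 v2 differ is
  resolved by a whole copy G \<times> {w}: adjacency k-resolvedness provides w with, say,
  v1 \<in> I[v2, w] and d(v2, w) \<ge> k > diam G, so the H-coordinate dominates both distances
  to any (x, w) and they differ. The copy G \<times> {w} has weight at least 1 because G has an edge.\<close>

section \<open>Lazy walks and distances in the strong product\<close>

text \<open>Zipping two lazy walks of equal length gives a walk of the strong product; a shortest
  walk padded by repeating its last vertex is a lazy walk of any larger length.\<close>

definition lazy_walk :: "'a set \<Rightarrow> ('a \<Rightarrow> 'a \<Rightarrow> bool) \<Rightarrow> 'a list \<Rightarrow> bool" where
  "lazy_walk V E xs \<longleftrightarrow> xs \<noteq> [] \<and> set xs \<subseteq> V \<and> successively (\<lambda>a b. E a b \<or> a = b) xs"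

lemma walk_between_imp_lazy_walk:
  "walk_between V E x y xs \<Longrightarrow> lazy_walk V E xs \<and> hd xs = x \<and> last xs = y"
  unfolding walk_between_def walk_def lazy_walk_def
  by (auto elim: successively_mono)

lemma lazy_walk_shortcut:
  assumes "lazy_walk V E xs"
  shows "\<exists>ys. walk_between V E (hd xs) (last xs) ys \<and> length ys \<le> length xs"
  using assms
proof (induction xs)
  case Nil
  then show ?case by (simp add: lazy_walk_def)
next
  case (Cons a xs)
  show ?case
  proof (cases "xs = []")
    case True
    then show ?thesis using Cons.prems
      by (intro exI[of _ "[a]"]) (auto simp: lazy_walk_def walk_between_def walk_def)
  next
    case False
    have "lazy_walk V E xs" and step: "E a (hd xs) \<or> a = hd xs"
      using Cons.prems False by (auto simp: lazy_walk_def successively_Cons)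
    then obtain ys where ys: "walk_between V E (hd xs) (last xs) ys" "length ys \<le> length xs"
      using Cons.IH by blast
    show ?thesis
    proof (cases "a = hd xs")
      case True
      then show ?thesis using ys False by (intro exI[of _ ys]) auto
    next
      case False
      then have "E a (hd ys)" using step ys by (auto simp: walk_between_def)
      then show ?thesis using ys \<open>xs \<noteq> []\<close> Cons.prems
        by (intro exI[of _ "a # ys"])
           (auto simp: walk_between_def walk_def lazy_walk_def successively_Cons)
    qed
  qed
qed

lemma gdist_le_walk_length: "walk_between V E x y xs \<Longrightarrow> gdist V E x y \<le> length xs - 1"
  unfolding gdist_def
  by (rule Least_le) (auto simp: walk_between_def walk_def intro!: exI[of _ xs])

lemma gdist_le_lazy_walk_length:
  "lazy_walk V E xs \<Longrightarrow> gdist V E (hd xs) (last xs) \<le> length xs - 1"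
  using lazy_walk_shortcut gdist_le_walk_length by fastforce

lemma shortest_walk_exists:
  assumes "walk_between V E x y xs"
  shows "\<exists>ys. walk_between V E x y ys \<and> length ys = gdist V E x y + 1"
proof -
  have "xs \<noteq> []" using assms by (auto simp: walk_between_def walk_def)
  then have "\<exists>n ys. walk_between V E x y ys \<and> length ys = n + 1"
    using assms by (intro exI[of _ "length xs - 1"] exI[of _ xs]) auto
  then show ?thesis unfolding gdist_def by (rule LeastI_ex)
qed

lemma connected_graph_shortest_walk:
  assumes "connected_graph V E" "x \<in> V" "y \<in> V"
  shows "\<exists>xs. walk_between V E x y xs \<and> length xs = gdist V E x y + 1"
proof -
  obtain xs where "walk_between V E x y xs"
    using assms unfolding connected_graph_def by blast
  then show ?thesis by (rule shortest_walk_exists)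
qed

lemma successively_Cons_replicate: "P c c \<Longrightarrow> successively P (c # replicate m c)"
  by (induction m) auto

lemma lazy_walk_pad:
  assumes "lazy_walk V E xs"
  shows "lazy_walk V E (xs @ replicate m (last xs))"
    and "last (xs @ replicate m (last xs)) = last xs"
  using assms by (cases m; auto simp: lazy_walk_def successively_append_iff successively_Cons_replicate)+

lemma successively_zip:
  assumes "length xs = length ys" "successively R xs" "successively S ys"
  shows "successively (\<lambda>p q. R (fst p) (fst q) \<and> S (snd p) (snd q)) (zip xs ys)"
  using assms
proof (induction xs ys rule: list_induct2)
  case Nil
  then show ?case by simp
next
  case (Cons x xs y ys)
  then show ?case by (cases xs; cases ys) (auto simp: successively_Cons)
qed

lemma lazy_walk_zip:
  assumes "lazy_walk V1 E1 xs" "lazy_walk V2 E2 ys" "length xs = length ys"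
  shows "lazy_walk (V1 \<times> V2) (strong_product_edges V1 V2 E1 E2) (zip xs ys)"
proof -
  have "successively (\<lambda>p q. (E1 (fst p) (fst q) \<or> fst p = fst q) \<and>
      (E2 (snd p) (snd q) \<or> snd p = snd q)) (zip xs ys)"
    using assms by (intro successively_zip) (auto simp: lazy_walk_def)
  moreover have "set (zip xs ys) \<subseteq> V1 \<times> V2"
    using assms by (auto simp: lazy_walk_def dest: set_zip_leftD set_zip_rightD)
  ultimately show ?thesis
    using assms by (auto simp: lazy_walk_def strong_product_edges_def elim!: successively_mono)
qed

lemma lazy_walk_strong_product_projections:
  assumes "lazy_walk (V1 \<times> V2) (strong_product_edges V1 V2 E1 E2) zs"
  shows "lazy_walk V1 E1 (map fst zs)" and "lazy_walk V2 E2 (map snd zs)"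
  using assms unfolding lazy_walk_def
  by (auto simp: successively_map strong_product_edges_def elim!: successively_mono)

lemma gdist_strong_product:
  assumes "connected_graph V1 E1" "connected_graph V2 E2"
    and "a \<in> V1" "c \<in> V1" "b \<in> V2" "d \<in> V2"
  shows "gdist (V1 \<times> V2) (strong_product_edges V1 V2 E1 E2) (a, b) (c, d)
         = max (gdist V1 E1 a c) (gdist V2 E2 b d)"
proof -
  let ?E = "strong_product_edges V1 V2 E1 E2"
  define m where "m = max (gdist V1 E1 a c) (gdist V2 E2 b d)"
  obtain xs where xs: "walk_between V1 E1 a c xs" "length xs = gdist V1 E1 a c + 1"
    using connected_graph_shortest_walk assms by metis
  obtain ys where ys: "walk_between V2 E2 b d ys" "length ys = gdist V2 E2 b d + 1"
    using connected_graph_shortest_walk assms by metis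
  define xs' where "xs' = xs @ replicate (m - gdist V1 E1 a c) (last xs)"
  define ys' where "ys' = ys @ replicate (m - gdist V2 E2 b d) (last ys)"
  have xs': "lazy_walk V1 E1 xs'" "hd xs' = a" "last xs' = c" "length xs' = m + 1"
    using walk_between_imp_lazy_walk[OF xs(1)] xs(2) lazy_walk_pad[of V1 E1 xs]
    unfolding xs'_def m_def by (auto simp: lazy_walk_def)
  have ys': "lazy_walk V2 E2 ys'" "hd ys' = b" "last ys' = d" "length ys' = m + 1"
    using walk_between_imp_lazy_walk[OF ys(1)] ys(2) lazy_walk_pad[of V2 E2 ys]
    unfolding ys'_def m_def by (auto simp: lazy_walk_def)
  have zs: "lazy_walk (V1 \<times> V2) ?E (zip xs' ys')"
    using lazy_walk_zip[OF xs'(1) ys'(1)] xs'(4) ys'(4) by simp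
  have "xs' \<noteq> []" "ys' \<noteq> []" using xs'(4) ys'(4) by auto
  then have ends: "hd (zip xs' ys') = (a, b)" "last (zip xs' ys') = (c, d)"
    using xs'(2-4) ys'(2-4) by (simp_all add: hd_zip last_zip)
  have upper: "gdist (V1 \<times> V2) ?E (a, b) (c, d) \<le> m"
    using gdist_le_lazy_walk_length[OF zs] ends xs'(4) ys'(4) by simp
  obtain ws where "walk_between (V1 \<times> V2) ?E (a, b) (c, d) ws"
    using lazy_walk_shortcut[OF zs] unfolding ends by blast
  then obtain ps where ps: "walk_between (V1 \<times> V2) ?E (a, b) (c, d) ps"
      "length ps = gdist (V1 \<times> V2) ?E (a, b) (c, d) + 1"
    using shortest_walk_exists by metis
  have ps': "lazy_walk (V1 \<times> V2) ?E ps" "hd ps = (a, b)" "last ps = (c, d)" "ps \<noteq> []"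
    using walk_between_imp_lazy_walk[OF ps(1)] by (auto simp: lazy_walk_def)
  have "gdist V1 E1 a c \<le> length ps - 1"
    using gdist_le_lazy_walk_length[OF lazy_walk_strong_product_projections(1)[OF ps'(1)]] ps'
    by (simp add: hd_map last_map)
  moreover have "gdist V2 E2 b d \<le> length ps - 1"
    using gdist_le_lazy_walk_length[OF lazy_walk_strong_product_projections(2)[OF ps'(1)]] ps'
    by (simp add: hd_map last_map)
  ultimately show ?thesis using upper ps(2) unfolding m_def by simp
qed

lemma gdist_self: "x \<in> V \<Longrightarrow> gdist V E x x = 0"
  using gdist_le_walk_length[of V E x x "[x]"] by (simp add: walk_between_def walk_def)

lemma gdist_eq_0_imp_eq:
  assumes "connected_graph V E" "x \<in> V" "y \<in> V" "gdist V E x y = 0"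
  shows "x = y"
proof -
  obtain xs where "walk_between V E x y xs" "length xs = gdist V E x y + 1"
    using connected_graph_shortest_walk[OF assms(1-3)] by blast
  then show ?thesis using assms(4) by (cases xs) (auto simp: walk_between_def)
qed

lemma gdist_less_if_in_interval:
  assumes "graph V E" "E a b" "a \<in> interval V E b w"
  shows "gdist V E a w < gdist V E b w"
proof -
  obtain xs where xs: "walk_between V E b w xs" "length xs = gdist V E b w + 1" "a \<in> set xs"
    using assms(3) unfolding interval_def by blast
  obtain p q where pq: "xs = p @ a # q" using split_list[OF xs(3)] by blast
  have "a \<noteq> b" using assms(1,2) unfolding graph_def by blast
  then have "p \<noteq> []" using pq xs(1) by (auto simp: walk_between_def)
  have "walk_between V E a w (a # q)"
    using xs(1) pq unfolding walk_between_def walk_def by (auto simp: successively_append_iff)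
  then have "gdist V E a w \<le> length q" using gdist_le_walk_length by fastforce
  also have "length q < gdist V E b w" using xs(2) pq \<open>p \<noteq> []\<close> by (cases p) auto
  finally show ?thesis .
qed

lemma gdist_le_diam: "finite V \<Longrightarrow> x \<in> V \<Longrightarrow> y \<in> V \<Longrightarrow> gdist V E x y \<le> diam V E"
  unfolding diam_def by (rule Max_ge) (auto intro: finite_image_set2)

lemma connected_graph_has_edge:
  assumes "connected_graph V E" "card V \<ge> 2"
  obtains u v where "E u v"
proof -
  have "finite V" using assms(1) by (auto simp: connected_graph_def graph_def)
  then obtain a b where ab: "a \<in> V" "b \<in> V" "a \<noteq> b"
    using assms(2) card_le_Suc0_iff_eq[of V] by (auto simp: not_less_eq_eq)
  then obtain xs where xs: "walk_between V E a b xs"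
    using assms(1) unfolding connected_graph_def by blast
  then obtain y ys where "xs = a # y # ys" using ab(3)
    by (cases xs; cases "tl xs") (auto simp: walk_between_def walk_def)
  then show ?thesis using xs that by (auto simp: walk_between_def walk_def)
qed

section \<open>Resolving the edges of the strong product\<close>

lemma resolving_set_edge_commute: "resolving_set_edge V E u v = resolving_set_edge V E v u"
  by (auto simp: resolving_set_edge_def)

lemma resolving_set_edge_strong_product_same_fiber:
  assumes "connected_graph V1 E1" "connected_graph V2 E2"
    and "u1 \<in> V1" "u2 \<in> V1" "v \<in> V2"
  shows "resolving_set_edge V1 E1 u1 u2 \<times> {v}
    \<subseteq> resolving_set_edge (V1 \<times> V2) (strong_product_edges V1 V2 E1 E2) (u1, v) (u2, v)"
  using assms gdist_strong_product[OF assms(1,2)] gdist_self[of v V2 E2]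
  by (auto simp: resolving_set_edge_def)

lemma resolving_set_edge_strong_product_far_fiber:
  assumes "connected_graph V1 E1" "connected_graph V2 E2"
    and "E2 v1 v2" "v1 \<in> interval V2 E2 v2 w" "w \<in> V2"
    and "diam V1 E1 < gdist V2 E2 v2 w"
    and "u1 \<in> V1" "u2 \<in> V1"
  shows "V1 \<times> {w}
    \<subseteq> resolving_set_edge (V1 \<times> V2) (strong_product_edges V1 V2 E1 E2) (u1, v1) (u2, v2)"
proof
  fix p assume "p \<in> V1 \<times> {w}"
  then obtain x where p: "p = (x, w)" "x \<in> V1" by blast
  have "graph V1 E1" "graph V2 E2" using assms(1,2) by (auto simp: connected_graph_def)
  then have "v1 \<in> V2" "v2 \<in> V2" "finite V1" using assms(3) by (auto simp: graph_def)
  have "gdist V2 E2 v1 w < gdist V2 E2 v2 w"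
    using gdist_less_if_in_interval[OF \<open>graph V2 E2\<close> assms(3,4)] .
  moreover have "gdist V1 E1 u1 x < gdist V2 E2 v2 w" "gdist V1 E1 u2 x < gdist V2 E2 v2 w"
    using gdist_le_diam[OF \<open>finite V1\<close>] assms(6-8) p(2) by (meson le_less_trans)+
  ultimately show "p \<in> resolving_set_edge (V1 \<times> V2) (strong_product_edges V1 V2 E1 E2) (u1, v1) (u2, v2)"
    using gdist_strong_product[OF assms(1,2)] assms(5,7,8) p \<open>v1 \<in> V2\<close> \<open>v2 \<in> V2\<close>
    by (auto simp: resolving_set_edge_def)
qed

lemma sum_le_sum_fst_if_fiber_subset:
  fixes f :: "'a \<Rightarrow> real"
  assumes "finite R" "A \<times> {v} \<subseteq> R" "\<forall>p\<in>R. 0 \<le> f (fst p)"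
  shows "(\<Sum>x\<in>A. f x) \<le> (\<Sum>p\<in>R. f (fst p))"
proof -
  have "A \<times> {v} = (\<lambda>x. (x, v)) ` A" by auto
  then have "(\<Sum>x\<in>A. f x) = (\<Sum>p\<in>A \<times> {v}. f (fst p))"
    by (simp add: sum.reindex inj_on_def)
  also have "\<dots> \<le> (\<Sum>p\<in>R. f (fst p))"
    using assms by (intro sum_mono2) auto
  finally show ?thesis .
qed

lemma strong_product_edge_resolved_by_fiber:
  assumes cg1: "connected_graph V1 E1" and "diam V1 E1 < k"
    and cg2: "connected_graph V2 E2" and "adjacency_k_resolved k V2 E2"
    and edge: "strong_product_edges V1 V2 E1 E2 (u1, v1) (u2, v2)"
  obtains v where "E1 u1 u2"
      "resolving_set_edge V1 E1 u1 u2 \<times> {v}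
        \<subseteq> resolving_set_edge (V1 \<times> V2) (strong_product_edges V1 V2 E1 E2) (u1, v1) (u2, v2)"
  | w where "V1 \<times> {w}
        \<subseteq> resolving_set_edge (V1 \<times> V2) (strong_product_edges V1 V2 E1 E2) (u1, v1) (u2, v2)"
proof (cases "v1 = v2")
  case True
  then have "E1 u1 u2" "u1 \<in> V1" "u2 \<in> V1" "v2 \<in> V2"
    using edge by (auto simp: strong_product_edges_def)
  then show ?thesis
    using that(1)[of v2] resolving_set_edge_strong_product_same_fiber[OF cg1 cg2, of u1 u2 v2] True
    by blast
next
  case False
  let ?R = "resolving_set_edge (V1 \<times> V2) (strong_product_edges V1 V2 E1 E2)"
  have in_V: "u1 \<in> V1" "u2 \<in> V1" and "E2 v1 v2"
    using edge False by (auto simp: strong_product_edges_def)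
  moreover have "E2 v2 v1" using \<open>E2 v1 v2\<close> cg2 by (auto simp: connected_graph_def graph_def)
  moreover obtain w where "w \<in> V2" and
      "(k \<le> gdist V2 E2 v2 w \<and> v1 \<in> interval V2 E2 v2 w) \<or>
       (k \<le> gdist V2 E2 v1 w \<and> v2 \<in> interval V2 E2 v1 w)"
    using \<open>E2 v1 v2\<close> \<open>adjacency_k_resolved k V2 E2\<close> unfolding adjacency_k_resolved_def by blast
  ultimately have "V1 \<times> {w} \<subseteq> ?R (u1, v1) (u2, v2) \<or> V1 \<times> {w} \<subseteq> ?R (u2, v2) (u1, v1)"
    using resolving_set_edge_strong_product_far_fiber[OF cg1 cg2] \<open>diam V1 E1 < k\<close>
    by (meson order.strict_trans2)
  then show ?thesis using that(2) resolving_set_edge_commute by metis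
qed

lemma local_resolving_function_strong_product:
  assumes cg1: "connected_graph V1 E1" and "card V1 \<ge> 2" and "diam V1 E1 < k"
    and cg2: "connected_graph V2 E2" and "adjacency_k_resolved k V2 E2"
    and f: "local_resolving_function V1 E1 f"
  shows "local_resolving_function (V1 \<times> V2) (strong_product_edges V1 V2 E1 E2) (\<lambda>p. f (fst p))"
proof -
  let ?E = "strong_product_edges V1 V2 E1 E2"
  let ?R = "resolving_set_edge (V1 \<times> V2) ?E"
  have "finite V1" and fin: "finite (V1 \<times> V2)"
    using cg1 cg2 by (auto simp: connected_graph_def graph_def)
  have nonneg: "\<forall>x\<in>V1. 0 \<le> f x"
    and resolves: "\<And>u v. E1 u v \<Longrightarrow> 1 \<le> sum f (resolving_set_edge V1 E1 u v)"
    using f by (auto simp: local_resolving_function_def)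
  have weight_V1: "1 \<le> sum f V1"
  proof -
    obtain u v where "E1 u v" using connected_graph_has_edge[OF cg1 \<open>card V1 \<ge> 2\<close>] .
    moreover have "sum f (resolving_set_edge V1 E1 u v) \<le> sum f V1"
      using \<open>finite V1\<close> nonneg by (intro sum_mono2) (auto simp: resolving_set_edge_def)
    ultimately show ?thesis using resolves by (meson order_trans)
  qed
  have "1 \<le> (\<Sum>p\<in>?R (u1, v1) (u2, v2). f (fst p))" if edge: "?E (u1, v1) (u2, v2)"
    for u1 v1 u2 v2
  proof -
    let ?R12 = "?R (u1, v1) (u2, v2)"
    obtain A v where "1 \<le> sum f A" "A \<times> {v} \<subseteq> ?R12"
    proof (rule strong_product_edge_resolved_by_fiber[OF cg1 \<open>diam V1 E1 < k\<close> cg2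
          \<open>adjacency_k_resolved k V2 E2\<close> edge])
      fix v assume "E1 u1 u2" "resolving_set_edge V1 E1 u1 u2 \<times> {v} \<subseteq> ?R12"
      then show thesis using that resolves by blast
    next
      fix w assume "V1 \<times> {w} \<subseteq> ?R12"
      then show thesis using that weight_V1 by blast
    qed
    moreover have "?R12 \<subseteq> V1 \<times> V2" by (auto simp: resolving_set_edge_def)
    then have "finite ?R12" "\<forall>p\<in>?R12. 0 \<le> f (fst p)"
      using finite_subset[OF _ fin] nonneg by auto
    ultimately show ?thesis
      using sum_le_sum_fst_if_fiber_subset[of ?R12 A v f] by linarith
  qed
  then show ?thesis using f by (auto simp: local_resolving_function_def)
qed

section \<open>Comparing fractional local metric dimensions\<close>

lemma local_resolving_function_const_one:
  assumes "connected_graph V E"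
  shows "local_resolving_function V E (\<lambda>_. 1)"
  unfolding local_resolving_function_def
proof (intro conjI allI impI)
  fix u v assume "E u v"
  then have uv: "u \<in> V" "v \<in> V" "u \<noteq> v" and "finite V"
    using assms by (auto simp: connected_graph_def graph_def)
  then have "u \<in> resolving_set_edge V E u v"
    using gdist_eq_0_imp_eq[OF assms uv(2,1)] gdist_self[OF uv(1)]
    by (auto simp: resolving_set_edge_def)
  moreover have "finite (resolving_set_edge V E u v)"
    using \<open>finite V\<close> by (auto simp: resolving_set_edge_def)
  ultimately show "1 \<le> (\<Sum>x\<in>resolving_set_edge V E u v. 1::real)"
    by (auto simp: Suc_le_eq card_gt_0_iff)
qed auto

lemma ldim_f_le_scaled:
  assumes "c > 0" and "local_resolving_function V E f0"
    and "\<And>f. local_resolving_function V E f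
           \<Longrightarrow> \<exists>g. local_resolving_function V' E' g \<and> sum g V' \<le> c * sum f V"
  shows "ldim_f V' E' \<le> c * ldim_f V E"
proof -
  let ?P = "{sum g V' | g. local_resolving_function V' E' g}"
  have "bdd_below ?P"
    by (rule bdd_belowI[of _ 0]) (auto simp: local_resolving_function_def intro!: sum_nonneg)
  have "Inf ?P / c \<le> sum f V" if f: "local_resolving_function V E f" for f
  proof -
    obtain g where "local_resolving_function V' E' g" "sum g V' \<le> c * sum f V"
      using assms(3)[OF f] by blast
    then have "Inf ?P \<le> c * sum f V"
      using cInf_lower[OF _ \<open>bdd_below ?P\<close>, of "sum g V'"] by fastforce
    then show ?thesis using \<open>c > 0\<close> by (simp add: field_simps)
  qed
  then have "Inf ?P / c \<le> ldim_f V E"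
    unfolding ldim_f_def using assms(2) by (intro cInf_greatest) auto
  then show ?thesis unfolding ldim_f_def using \<open>c > 0\<close> by (simp add: field_simps)
qed

lemma sum_fst_cartesian:
  fixes f :: "'a \<Rightarrow> real"
  shows "(\<Sum>p\<in>A \<times> B. f (fst p)) = real (card B) * sum f A"
proof -
  have "(\<Sum>p\<in>A \<times> B. f (fst p)) = (\<Sum>x\<in>A. \<Sum>y\<in>B. f x)"
    by (subst sum.cartesian_product) (simp add: case_prod_beta)
  then show ?thesis by (simp add: sum_distrib_left)
qed

theorem theorem3p4:
  fixes V1 :: "'a set" and E1 :: "'a \<Rightarrow> 'a \<Rightarrow> bool"
    and V2 :: "'b set" and E2 :: "'b \<Rightarrow> 'b \<Rightarrow> bool"
    and k n2 :: nat
  assumes "k > 0"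
    and "connected_graph V1 E1" and "card V1 \<ge> 2" and "diam V1 E1 < k"
    and "connected_graph V2 E2" and "adjacency_k_resolved k V2 E2" and "card V2 = n2"
  shows "ldim_f (V1 \<times> V2) (strong_product_edges V1 V2 E1 E2) \<le> real n2 * ldim_f V1 E1"
proof (rule ldim_f_le_scaled)
  have "finite V2" "V2 \<noteq> {}" using assms(5) by (auto simp: connected_graph_def graph_def)
  then have "card V2 > 0" by (simp add: card_gt_0_iff)
  then show "real n2 > 0" using assms(7) by simp
  show "local_resolving_function V1 E1 (\<lambda>_. 1)"
    using local_resolving_function_const_one[OF assms(2)] .
  fix f assume "local_resolving_function V1 E1 f"
  then show "\<exists>g. local_resolving_function (V1 \<times> V2) (strong_product_edges V1 V2 E1 E2) g
      \<and> sum g (V1 \<times> V2) \<le> real n2 * sum f V1"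
    using local_resolving_function_strong_product[OF assms(2-6)] sum_fst_cartesian[of f V1 V2] assms(7)
    by (intro exI[of _ "\<lambda>p. f (fst p)"]) simp
qed

end
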